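(* Let $s>0$, $\gamma\ge0$, $u>0$, and $\nu_0,\nu_1\ge0$ with $\nu_0+\nu_1=1$. Let $(a_t)_{t\ge0}$ be the embedded ASG process, and let $y(\cdot;y_0)$ solve $$\dot y=-y(1-y)[s+\gamma(1-y)]+u\nu_1(1-y)-u\nu_0y,\qquad y(0)=y_0\in[0,1].$$ Then for all $\alpha\in\Xi^\star$, $t\ge0$ and $y_0\in[0,1]$, $$H\big(\alpha,y(t;y_0)\big)=\mathbb E_\alpha\big[H(a_t,y_0)\big].$$ In particular, if the process starts from the tree consisting only of an unmarked root, then $y(t;y_0)=\mathbb E\big[H(a_t,y_0)\big]$.
   Context: $\Xi^\star$ is the set of finite rooted trees with the following properties: every vertex has outdegree at most 3; the children of a vertex of outdegree 2 are labelled left and right, and those of a vertex of outdegree 3 are labelled left, middle and right; every vertex of outdegree 1 carries a mark, either $\times$ or $\circ$; no other vertex carries a mark. The embedded ASG process $(a_t)_{t\ge0}$ is the continuous-time Markov chain on $\Xi^\star$ in which, independently for each leaf $\ell$ of the current tree: - at rate $s$, two children (left, right) are attached to $\ell$; - at rate $\gamma$, three children (left, middle, right) are attached to $\ell$; - at rate $u\nu_1$, one child is attached to $\ell$ and $\ell$ is marked $\times$; - at rate $u\nu_0$, one child is attached to $\ell$ and $\ell$ is marked $\circ$. $\mathbb E_\alpha$ denotes expectation when $a_0=\alpha$. For $\alpha\in\Xi^\star$ and $z\in[0,1]$, $H(\alpha,z)$ is the probability that the root of $\alpha$ gets type 1 ("unfit"). Types are obtained as follows. Each leaf independently gets type 1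 with probability $z$ and type 0 otherwise. Types then propagate to the root: a vertex marked $\times$ (resp. $\circ$) has type 1 (resp. 0); a vertex of outdegree 2 has type 1 iff both children have type 1; a vertex of outdegree 3 has type 0 iff its left child has type 0 or both its middle and right children have type 0. *)

theory Defs
  imports "HOL-Analysis.Analysis"
begin

datatype mark = Cross | Circ

text \<open>Finite rooted trees in Xi-star: a leaf; a vertex of outdegree 1 carrying a mark
  and its child; a vertex of outdegree 2 with left/right child; a vertex of
  outdegree 3 with left/middle/right child.\<close>
datatype xi = Leaf | Unary mark xi | Binary xi xi | Ternary xi xi xi

text \<open>H alpha z: probability that the root gets type 1 (unfit), leaves i.i.d.
  type 1 with probability z; subtrees are disjoint hence independent.\<close>
fun H :: "xi \<Rightarrow> real \<Rightarrow> real" where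
  "H Leaf z = z"
| "H (Unary Cross t) z = 1"
| "H (Unary Circ t) z = 0"
| "H (Binary l r) z = H l z * H r z"
| "H (Ternary l m r) z = H l z * (1 - (1 - H m z) * (1 - H r z))"

fun asg_trans :: "real \<Rightarrow> real \<Rightarrow> real \<Rightarrow> real \<Rightarrow> real \<Rightarrow> xi \<Rightarrow> (real \<times> xi) list" where
  "asg_trans s g u nu0 nu1 Leaf =
     [(s, Binary Leaf Leaf), (g, Ternary Leaf Leaf Leaf),
      (u * nu1, Unary Cross Leaf), (u * nu0, Unary Circ Leaf)]"
| "asg_trans s g u nu0 nu1 (Unary m t) =
     map (\<lambda>(c, t'). (c, Unary m t')) (asg_trans s g u nu0 nu1 t)"
| "asg_trans s g u nu0 nu1 (Binary l r) =
     map (\<lambda>(c, l'). (c, Binary l' r)) (asg_trans s g u nu0 nu1 l) @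
     map (\<lambda>(c, r'). (c, Binary l r')) (asg_trans s g u nu0 nu1 r)"
| "asg_trans s g u nu0 nu1 (Ternary l m r) =
     map (\<lambda>(c, l'). (c, Ternary l' m r)) (asg_trans s g u nu0 nu1 l) @
     map (\<lambda>(c, m'). (c, Ternary l m' r)) (asg_trans s g u nu0 nu1 m) @
     map (\<lambda>(c, r'). (c, Ternary l m r')) (asg_trans s g u nu0 nu1 r)"

definition asg_rate :: "real \<Rightarrow> real \<Rightarrow> real \<Rightarrow> real \<Rightarrow> real \<Rightarrow> xi \<Rightarrow> real" where
  "asg_rate s g u nu0 nu1 a = (\<Sum>(c, b)\<leftarrow>asg_trans s g u nu0 nu1 a. c)"

text \<open>asg_part n f a t = E_a[ f(a_t) ; exactly n jumps in [0,t] ],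
  via the first-jump decomposition (minimal chain construction).\<close>
fun asg_part :: "real \<Rightarrow> real \<Rightarrow> real \<Rightarrow> real \<Rightarrow> real \<Rightarrow> nat \<Rightarrow> (xi \<Rightarrow> real) \<Rightarrow> xi \<Rightarrow> real \<Rightarrow> real" where
  "asg_part s g u nu0 nu1 0 f a t = exp (- asg_rate s g u nu0 nu1 a * t) * f a"
| "asg_part s g u nu0 nu1 (Suc n) f a t =
     integral {0..t} (\<lambda>r. exp (- asg_rate s g u nu0 nu1 a * r) *
        (\<Sum>(c, b)\<leftarrow>asg_trans s g u nu0 nu1 a. c * asg_part s g u nu0 nu1 n f b (t - r)))"

definition asg_expect :: "real \<Rightarrow> real \<Rightarrow> real \<Rightarrow> real \<Rightarrow> real \<Rightarrow> (xi \<Rightarrow> real) \<Rightarrow> xi \<Rightarrow> real \<Rightarrow> real" where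
  "asg_expect s g u nu0 nu1 f a t = (\<Sum>n. asg_part s g u nu0 nu1 n f a t)"

end

theory Submission
  imports Defs
begin

text \<open>
  The right-hand side of the ODE is dual to the generator of the ASG: for every tree \<open>a\<close>,
  \<open>\<partial>\<^sub>z H(a, z) \<cdot> drift z = \<Sum> c \<cdot> H(b, z) - rate a \<cdot> H(a, z)\<close>, the sum running over the jumps
  \<open>a \<rightarrow> b\<close> at rate \<open>c\<close>. Hence \<open>w(a, t) = H(a, y t)\<close> solves the first-jump integral equation
  \<open>w(a, t) = exp (- rate a \<cdot> t) \<cdot> w(a, 0) + J w (a, t)\<close> of the process, whose Picard iterates are the partial sums
  defining the expectation. The error of the \<open>N\<close>-th partial sum is at most \<open>J\<^sup>N 1\<close>, the
  probability of at least \<open>N\<close> jumps, and this tends to \<open>0\<close> because the expected number of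
  jumps is finite: leaves multiply at rate at most \<open>s + 2 gm\<close>. The bound \<open>|w| \<le> 1\<close> needed
  here comes from the invariance of \<open>[0, 1]\<close> under the ODE, proved by a comparison argument.
\<close>

section \<open>A comparison principle for scalar ODEs\<close>

lemma last_nonpos_point:
  fixes z :: "real \<Rightarrow> real"
  assumes "continuous_on {0..T} z" and "0 \<le> T" and "z 0 \<le> 0" and "0 < z T"
  obtains t0 where "0 \<le> t0" "t0 < T" "z t0 \<le> 0" "\<forall>x\<in>{t0<..T}. 0 < z x"
proof -
  define S where "S = {0..T} \<inter> z -` {..0}"
  have "closed S"
    unfolding S_def by (rule continuous_closed_preimage[OF assms(1)]) auto
  moreover have "bounded S"
    unfolding S_def by (rule bounded_subset[of "{0..T}"]) auto
  ultimately have "compact S"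
    by (simp add: compact_eq_bounded_closed)
  have "0 \<in> S"
    using assms(2,3) by (simp add: S_def)
  then obtain t0 where "t0 \<in> S" and t0_max: "\<And>x. x \<in> S \<Longrightarrow> x \<le> t0"
    using compact_attains_sup[OF \<open>compact S\<close>] by blast
  then have "0 \<le> t0" "t0 \<le> T" "z t0 \<le> 0"
    by (auto simp: S_def)
  moreover have "t0 \<noteq> T"
    using \<open>z t0 \<le> 0\<close> assms(4) by auto
  moreover have "\<forall>x\<in>{t0<..T}. 0 < z x"
  proof (rule ballI, rule ccontr)
    fix x assume "x \<in> {t0<..T}"
    assume "\<not> 0 < z x"
    then have "x \<in> S"
      using \<open>x \<in> {t0<..T}\<close> \<open>0 \<le> t0\<close> by (simp add: S_def)
    then show False
      using t0_max \<open>x \<in> {t0<..T}\<close> by fastforce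
  qed
  ultimately show thesis
    using that by simp
qed

lemma nonpos_preserved_by_deriv_bound:
  fixes z z' :: "real \<Rightarrow> real"
  assumes z_continuous: "continuous_on {0..T} z" and "0 \<le> T" and "z 0 \<le> 0"
    and z_deriv: "\<And>x. 0 < x \<Longrightarrow> x < T \<Longrightarrow> (z has_real_derivative z' x) (at x)"
    and z'_le: "\<And>x. 0 < x \<Longrightarrow> x < T \<Longrightarrow> 0 < z x \<Longrightarrow> z' x \<le> M * z x"
  shows "z T \<le> 0"
proof (rule ccontr)
  assume "\<not> z T \<le> 0"
  then have "0 < z T"
    by simp
  then obtain t0 where "0 \<le> t0" "t0 < T" "z t0 \<le> 0" and z_pos: "\<forall>x\<in>{t0<..T}. 0 < z x"
    by (rule last_nonpos_point[OF z_continuous \<open>0 \<le> T\<close> \<open>z 0 \<le> 0\<close>])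
  define \<phi> where "\<phi> x = exp (- M * x) * z x" for x
  have "continuous_on {t0..T} \<phi>"
    unfolding \<phi>_def using \<open>0 \<le> t0\<close>
    by (intro continuous_intros continuous_on_subset[OF z_continuous]) auto
  moreover have \<phi>_deriv: "(\<phi> has_real_derivative exp (- M * x) * (z' x - M * z x)) (at x)"
    if "t0 < x" "x < T" for x
  proof -
    have "((\<lambda>x. exp (- M * x)) has_real_derivative exp (- M * x) * (- M)) (at x)"
      by (auto intro!: derivative_eq_intros)
    from DERIV_mult[OF this z_deriv] show ?thesis
      unfolding \<phi>_def using that \<open>0 \<le> t0\<close> by (simp add: algebra_simps)
  qed
  ultimately obtain l \<xi> where \<xi>: "t0 < \<xi>" "\<xi> < T" "(\<phi> has_real_derivative l) (at \<xi>)"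
    and "\<phi> T - \<phi> t0 = (T - t0) * l"
    using MVT[OF \<open>t0 < T\<close>] by (meson real_differentiable_def)
  moreover have "l = exp (- M * \<xi>) * (z' \<xi> - M * z \<xi>)"
    using DERIV_unique[OF \<xi>(3) \<phi>_deriv[OF \<xi>(1,2)]] .
  moreover have "z' \<xi> - M * z \<xi> \<le> 0"
    using z'_le[of \<xi>] z_pos[rule_format, of \<xi>] \<xi>(1,2) \<open>0 \<le> t0\<close> by simp
  then have "(T - t0) * (exp (- M * \<xi>) * (z' \<xi> - M * z \<xi>)) \<le> 0"
    using \<open>t0 < T\<close> by (intro mult_nonneg_nonpos mult_nonneg_nonpos) auto
  ultimately have "\<phi> T \<le> \<phi> t0"
    by simp
  moreover have "\<phi> t0 \<le> 0"
    unfolding \<phi>_def using \<open>z t0 \<le> 0\<close> by (simp add: mult_nonneg_nonpos)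
  moreover have "0 < \<phi> T"
    unfolding \<phi>_def using z_pos[rule_format, of T] \<open>t0 < T\<close> by simp
  ultimately show False
    by simp
qed

lemma DERIV_on_nonneg_realsD:
  fixes y :: "real \<Rightarrow> real"
  assumes "\<And>t. 0 \<le> t \<Longrightarrow> (y has_real_derivative y' t) (at t within {0..})"
  shows "continuous_on {0..T} y" and "0 < t \<Longrightarrow> (y has_real_derivative y' t) (at t)"
proof -
  have "continuous (at t within {0..}) y" if "0 \<le> t" for t
    using DERIV_continuous[OF assms[OF that]] .
  then have "continuous_on {0..} y"
    by (simp add: continuous_on_eq_continuous_within)
  then show "continuous_on {0..T} y"
    by (rule continuous_on_subset) auto
  show "(y has_real_derivative y' t) (at t)" if "0 < t"
  proof -
    have "at t within {0..} = at t"
      by (rule at_within_interior) (use that in auto)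
    then show ?thesis
      using assms[of t] that by simp
  qed
qed

lemma integral_reflect_Icc:
  fixes f :: "real \<Rightarrow> 'a::euclidean_space"
  shows "integral {0..t} (\<lambda>r. f (t - r)) = integral {0..t} f"
proof -
  have shift: "(\<lambda>r. f (t - r)) = (\<lambda>x. f (- x)) \<circ> (+) (- t)"
    by (auto simp: o_def)
  have ivl: "{0 + - t..t + - t} = {- t..- 0}"
    by simp
  show ?thesis
    unfolding shift integral_shift_Icc_real ivl Henstock_Kurzweil_Integration.integral_reflect_real ..
qed

definition weighted_sum :: "(real \<times> 'a) list \<Rightarrow> ('a \<Rightarrow> real) \<Rightarrow> real" where
  "weighted_sum xs h = (\<Sum>(c, b)\<leftarrow>xs. c * h b)"

lemma weighted_sum_Nil [simp]: "weighted_sum [] h = 0"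
  and weighted_sum_Cons [simp]: "weighted_sum ((c, b) # xs) h = c * h b + weighted_sum xs h"
  and weighted_sum_append [simp]: "weighted_sum (xs @ ys) h = weighted_sum xs h + weighted_sum ys h"
  by (simp_all add: weighted_sum_def)

lemma weighted_sum_map_target [simp]:
  "weighted_sum (map (\<lambda>(c, x). (c, G x)) xs) h = weighted_sum xs (\<lambda>x. h (G x))"
  by (induction xs) auto

lemma weighted_sum_add:
  "weighted_sum xs (\<lambda>b. f b + g b) = weighted_sum xs f + weighted_sum xs g"
  by (induction xs) (auto simp: algebra_simps)

lemma weighted_sum_diff:
  "weighted_sum xs (\<lambda>b. f b - g b) = weighted_sum xs f - weighted_sum xs g"
  by (induction xs) (auto simp: algebra_simps)

lemma weighted_sum_mult_left:
  "weighted_sum xs (\<lambda>b. k * f b) = k * weighted_sum xs f"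
  by (induction xs) (auto simp: algebra_simps)

lemma weighted_sum_mult_right:
  "weighted_sum xs (\<lambda>b. f b * k) = weighted_sum xs f * k"
  by (induction xs) (auto simp: algebra_simps)

lemma weighted_sum_const:
  "weighted_sum xs (\<lambda>b. k) = k * (\<Sum>(c, b)\<leftarrow>xs. c)"
  by (induction xs) (auto simp: algebra_simps)

lemma weighted_sum_abs_le:
  assumes "\<And>c b. (c, b) \<in> set xs \<Longrightarrow> 0 \<le> c" and "\<And>b. \<bar>f b\<bar> \<le> g b"
  shows "\<bar>weighted_sum xs f\<bar> \<le> weighted_sum xs g"
  using assms(1)
proof (induction xs)
  case (Cons x xs)
  obtain c b where x: "x = (c, b)" by force
  moreover have "0 \<le> c"
    using Cons.prems[of c b] x by simp
  ultimately have "\<bar>c * f b\<bar> \<le> c * g b"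
    using assms(2)[of b] by (simp add: abs_mult mult_left_mono)
  moreover have "\<bar>weighted_sum xs f\<bar> \<le> weighted_sum xs g"
    using Cons by auto
  ultimately show ?case
    using x abs_triangle_ineq[of "c * f b" "weighted_sum xs f"] by simp
qed simp

lemma continuous_on_weighted_sum:
  "(\<And>b. continuous_on S (h b)) \<Longrightarrow> continuous_on S (\<lambda>\<tau>. weighted_sum xs (\<lambda>b. h b \<tau>))"
  by (induction xs) (auto intro!: continuous_intros)

fun dH :: "xi \<Rightarrow> real \<Rightarrow> real" where
  "dH Leaf z = 1"
| "dH (Unary m t) z = 0"
| "dH (Binary l r) z = dH l z * H r z + H l z * dH r z"
| "dH (Ternary l m r) z = dH l z * (1 - (1 - H m z) * (1 - H r z))
     + H l z * (dH m z * (1 - H r z) + (1 - H m z) * dH r z)"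

lemma DERIV_H: "((\<lambda>z. H a z) has_real_derivative dH a z) (at z)"
proof (induction a)
  case (Unary m a) then show ?case by (cases m) auto
qed (auto intro!: derivative_eq_intros simp: algebra_simps)

lemma continuous_on_H: "continuous_on S (H a)"
  by (meson DERIV_H DERIV_isCont continuous_at_imp_continuous_on)

lemma H_bounds: "0 \<le> z \<Longrightarrow> z \<le> 1 \<Longrightarrow> 0 \<le> H a z \<and> H a z \<le> 1"
proof (induction a)
  case (Unary m a) then show ?case by (cases m) auto
qed (auto simp: mult_le_one)

fun leaves :: "xi \<Rightarrow> nat" where
  "leaves Leaf = 1"
| "leaves (Unary m t) = leaves t"
| "leaves (Binary l r) = leaves l + leaves r"
| "leaves (Ternary l m r) = leaves l + leaves m + leaves r"

definition time_continuous :: "('a \<Rightarrow> real \<Rightarrow> real) \<Rightarrow> bool" where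
  "time_continuous h \<longleftrightarrow> (\<forall>b T. continuous_on {0..T} (h b))"

lemma time_continuous_const: "time_continuous (\<lambda>b \<tau>. k b)"
  by (simp add: time_continuous_def)

lemma time_continuous_add:
  "time_continuous h \<Longrightarrow> time_continuous k \<Longrightarrow> time_continuous (\<lambda>b \<tau>. h b \<tau> + k b \<tau>)"
  unfolding time_continuous_def by (auto intro!: continuous_intros)

lemma time_continuous_diff:
  "time_continuous h \<Longrightarrow> time_continuous k \<Longrightarrow> time_continuous (\<lambda>b \<tau>. h b \<tau> - k b \<tau>)"
  unfolding time_continuous_def by (auto intro!: continuous_intros)

lemma time_continuous_sum:
  "(\<And>n::nat. time_continuous (h n)) \<Longrightarrow> time_continuous (\<lambda>b \<tau>. \<Sum>n<N. h n b \<tau>)"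
  unfolding time_continuous_def by (auto intro!: continuous_intros)

section \<open>Duality and the first-jump operator\<close>

locale asg =
  fixes s gm u nu0 nu1 :: real
begin

abbreviation jumps :: "xi \<Rightarrow> (real \<times> xi) list" where
  "jumps \<equiv> asg_trans s gm u nu0 nu1"

abbreviation rate :: "xi \<Rightarrow> real" where
  "rate \<equiv> asg_rate s gm u nu0 nu1"

definition drift :: "real \<Rightarrow> real" where
  "drift z = - z * (1 - z) * (s + gm * (1 - z)) + u * nu1 * (1 - z) - u * nu0 * z"

lemma rate_eq_weighted_sum: "rate a = weighted_sum (jumps a) (\<lambda>b. 1)"
  by (simp add: asg_rate_def weighted_sum_def)

lemma weighted_sum_jumps_const: "weighted_sum (jumps a) (\<lambda>b. k) = k * rate a"
  by (simp add: rate_eq_weighted_sum weighted_sum_const)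

lemma rate_simps [simp]:
  "rate Leaf = s + gm + u * nu1 + u * nu0"
  "rate (Unary m t) = rate t"
  "rate (Binary l r) = rate l + rate r"
  "rate (Ternary l m' r) = rate l + rate m' + rate r"
  by (simp_all add: rate_eq_weighted_sum)

lemma rate_eq_leaves: "rate a = (s + gm + u * nu1 + u * nu0) * leaves a"
  by (induction a) (simp_all add: algebra_simps)

lemma weighted_sum_jumps_leaves:
  "weighted_sum (jumps a) (\<lambda>b. real (leaves b)) = leaves a * (rate a + s + 2 * gm)"
  by (induction a) (simp_all add: weighted_sum_add weighted_sum_jumps_const algebra_simps)

theorem H_duality:
  "dH a z * drift z = weighted_sum (jumps a) (\<lambda>b. H b z) - rate a * H a z"
proof (induction a)
  case Leaf
  show ?case by (simp add: drift_def algebra_simps)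
next
  case (Unary m a)
  show ?case by (cases m) (simp_all add: weighted_sum_jumps_const)
next
  case (Binary l r)
  have "dH (Binary l r) z * drift z = (dH l z * drift z) * H r z + H l z * (dH r z * drift z)"
    by (simp add: algebra_simps)
  also have "\<dots> = weighted_sum (jumps (Binary l r)) (\<lambda>b. H b z) - rate (Binary l r) * H (Binary l r) z"
    unfolding Binary.IH by (simp add: weighted_sum_mult_left weighted_sum_mult_right algebra_simps)
  finally show ?case .
next
  case (Ternary l m r)
  have "dH (Ternary l m r) z * drift z = (dH l z * drift z) * (1 - (1 - H m z) * (1 - H r z))
     + H l z * ((dH m z * drift z) * (1 - H r z) + (1 - H m z) * (dH r z * drift z))"
    by (simp add: algebra_simps)
  also have "\<dots> = weighted_sum (jumps (Ternary l m r)) (\<lambda>b. H b z)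
      - rate (Ternary l m r) * H (Ternary l m r) z"
    unfolding Ternary.IH
    by (simp add: weighted_sum_add weighted_sum_diff weighted_sum_jumps_const
        weighted_sum_mult_left weighted_sum_mult_right algebra_simps)
  finally show ?case .
qed

definition jump_op :: "(xi \<Rightarrow> real \<Rightarrow> real) \<Rightarrow> xi \<Rightarrow> real \<Rightarrow> real" where
  "jump_op h a t =
     integral {0..t} (\<lambda>r. exp (- rate a * r) * weighted_sum (jumps a) (\<lambda>b. h b (t - r)))"

lemma asg_part_Suc_eq_jump_op:
  "asg_part s gm u nu0 nu1 (Suc n) f = jump_op (asg_part s gm u nu0 nu1 n f)"
  by (intro ext) (simp add: jump_op_def weighted_sum_def)

lemma jump_op_eq_convolution:
  "jump_op h a t = exp (- rate a * t) *
     integral {0..t} (\<lambda>\<tau>. exp (rate a * \<tau>) * weighted_sum (jumps a) (\<lambda>b. h b \<tau>))"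
proof -
  let ?g = "\<lambda>\<tau>. exp (rate a * \<tau>) * weighted_sum (jumps a) (\<lambda>b. h b \<tau>)"
  have "jump_op h a t = integral {0..t} (\<lambda>r. exp (- rate a * t) * ?g (t - r))"
    unfolding jump_op_def
    by (intro arg_cong[where f="integral _"] ext) (simp add: mult.assoc[symmetric] right_diff_distrib flip: exp_add)
  also have "\<dots> = exp (- rate a * t) * integral {0..t} (\<lambda>r. ?g (t - r))"
    using integral_cmul[where c="exp (- rate a * t)" and f="\<lambda>r. ?g (t - r)" and S="{0..t}"] by simp
  also have "\<dots> = exp (- rate a * t) * integral {0..t} ?g"
    by (simp only: integral_reflect_Icc[of t ?g])
  finally show ?thesis .
qed

lemma integrable_jump_op_integrand:
  assumes "time_continuous h"
  shows "(\<lambda>r. exp (- rate a * r) * weighted_sum (jumps a) (\<lambda>b. h b (t - r))) integrable_on {0..t}"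
proof -
  have "continuous_on {0..t} (\<lambda>r. h b (t - r))" for b
    by (rule continuous_on_compose2[of "{0..t}" "h b" "{0..t}" "\<lambda>r. t - r"])
      (use assms in \<open>auto simp: time_continuous_def intro!: continuous_intros\<close>)
  then have "continuous_on {0..t} (\<lambda>r. weighted_sum (jumps a) (\<lambda>b. h b (t - r)))"
    by (rule continuous_on_weighted_sum)
  then show ?thesis
    by (intro integrable_continuous_interval continuous_on_mult continuous_on_exp continuous_on_id
        continuous_on_mult_left)
qed

lemma jump_op_add:
  assumes "time_continuous h" and "time_continuous k"
  shows "jump_op (\<lambda>b \<tau>. h b \<tau> + k b \<tau>) a t = jump_op h a t + jump_op k a t"
  unfolding jump_op_def weighted_sum_add distrib_left
  by (intro integral_add integrable_jump_op_integrand assms)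

lemma jump_op_diff:
  assumes "time_continuous h" and "time_continuous k"
  shows "jump_op (\<lambda>b \<tau>. h b \<tau> - k b \<tau>) a t = jump_op h a t - jump_op k a t"
  unfolding jump_op_def weighted_sum_diff right_diff_distrib
  by (intro integral_diff integrable_jump_op_integrand assms)

lemma jump_op_sum:
  fixes h :: "nat \<Rightarrow> xi \<Rightarrow> real \<Rightarrow> real"
  assumes "\<And>n. time_continuous (h n)"
  shows "jump_op (\<lambda>b \<tau>. \<Sum>n<N. h n b \<tau>) a t = (\<Sum>n<N. jump_op (h n) a t)"
proof (induction N)
  case 0
  show ?case by (simp add: jump_op_def weighted_sum_const)
next
  case (Suc N)
  have "jump_op (\<lambda>b \<tau>. \<Sum>n<Suc N. h n b \<tau>) a t
      = jump_op (\<lambda>b \<tau>. \<Sum>n<N. h n b \<tau>) a t + jump_op (h N) a t"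
    using jump_op_add[OF time_continuous_sum[OF assms] assms] by simp
  with Suc show ?case by simp
qed

lemma time_continuous_jump_op:
  assumes "time_continuous h"
  shows "time_continuous (jump_op h)"
  unfolding time_continuous_def
proof (intro allI)
  fix a T
  let ?g = "\<lambda>\<tau>. exp (rate a * \<tau>) * weighted_sum (jumps a) (\<lambda>b. h b \<tau>)"
  have "continuous_on {0..T} ?g"
    using assms unfolding time_continuous_def
    by (auto intro!: continuous_intros continuous_on_weighted_sum)
  then have "continuous_on {0..T} (\<lambda>t. integral {0..t} ?g)"
    by (intro indefinite_integral_continuous_1 integrable_continuous_interval)
  then show "continuous_on {0..T} (jump_op h a)"
    unfolding jump_op_eq_convolution by (intro continuous_intros)
qed

lemma time_continuous_jump_op_iterate:
  "time_continuous h \<Longrightarrow> time_continuous ((jump_op ^^ N) h)"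
  by (induction N) (simp_all add: time_continuous_jump_op)

lemma H_drift_solution_integral_eq:
  fixes y :: "real \<Rightarrow> real"
  assumes y_deriv: "\<And>t. 0 \<le> t \<Longrightarrow> (y has_real_derivative drift (y t)) (at t within {0..})"
    and "0 \<le> t"
  shows "H a (y t) = exp (- rate a * t) * H a (y 0) + jump_op (\<lambda>b \<tau>. H b (y \<tau>)) a t"
proof -
  let ?g = "\<lambda>\<tau>. exp (rate a * \<tau>) * weighted_sum (jumps a) (\<lambda>b. H b (y \<tau>))"
  have "((\<lambda>\<tau>. exp (rate a * \<tau>) * H a (y \<tau>)) has_vector_derivative ?g \<tau>) (at \<tau> within {0..t})"
    if "\<tau> \<in> {0..t}" for \<tau>
  proof -
    have "((\<lambda>\<tau>. H a (y \<tau>)) has_real_derivative dH a (y \<tau>) * drift (y \<tau>)) (at \<tau> within {0..t})"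
      using that by (intro DERIV_chain2[OF DERIV_H] DERIV_subset[OF y_deriv]) auto
    then have "((\<lambda>\<tau>. exp (rate a * \<tau>) * H a (y \<tau>)) has_real_derivative
        exp (rate a * \<tau>) * (rate a * H a (y \<tau>) + dH a (y \<tau>) * drift (y \<tau>))) (at \<tau> within {0..t})"
      by (auto intro!: derivative_eq_intros simp: algebra_simps)
    then show ?thesis
      by (simp add: H_duality has_real_derivative_iff_has_vector_derivative)
  qed
  then have "(?g has_integral exp (rate a * t) * H a (y t) - H a (y 0)) {0..t}"
    using fundamental_theorem_of_calculus[OF \<open>0 \<le> t\<close>,
        of "\<lambda>\<tau>. exp (rate a * \<tau>) * H a (y \<tau>)" ?g]
    by simp
  then show ?thesis
    by (simp add: jump_op_eq_convolution integral_unique right_diff_distrib mult.assoc[symmetric]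
        flip: exp_add)
qed

end

section \<open>Non-explosion and uniqueness for the first-jump equation\<close>

locale asg_rates = asg +
  assumes s_pos: "0 < s" and gm_nonneg: "0 \<le> gm" and u_nonneg: "0 \<le> u"
    and nu0_nonneg: "0 \<le> nu0" and nu1_nonneg: "0 \<le> nu1"
begin

lemma jumps_rate_nonneg: "(c, b) \<in> set (jumps a) \<Longrightarrow> 0 \<le> c"
  using s_pos gm_nonneg u_nonneg nu0_nonneg nu1_nonneg by (induction a arbitrary: c b) auto

lemma jump_op_abs_le:
  assumes "time_continuous h" and "time_continuous k"
    and "\<And>b \<tau>. 0 \<le> \<tau> \<Longrightarrow> \<bar>h b \<tau>\<bar> \<le> k b \<tau>"
  shows "\<bar>jump_op h a t\<bar> \<le> jump_op k a t"
  unfolding jump_op_def real_norm_def[symmetric]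
proof (rule integral_norm_bound_integral[OF integrable_jump_op_integrand integrable_jump_op_integrand])
  fix r assume r: "r \<in> {0..t}"
  have "\<bar>weighted_sum (jumps a) (\<lambda>b. h b (t - r))\<bar> \<le> weighted_sum (jumps a) (\<lambda>b. k b (t - r))"
    by (rule weighted_sum_abs_le) (use jumps_rate_nonneg assms(3) r in auto)
  then show "norm (exp (- rate a * r) * weighted_sum (jumps a) (\<lambda>b. h b (t - r)))
      \<le> exp (- rate a * r) * weighted_sum (jumps a) (\<lambda>b. k b (t - r))"
    by (simp add: abs_mult mult_left_mono)
qed (use assms in auto)

lemma jump_op_nonneg:
  assumes "time_continuous k" and "\<And>b \<tau>. 0 \<le> \<tau> \<Longrightarrow> 0 \<le> k b \<tau>"
  shows "0 \<le> jump_op k a t"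
  using jump_op_abs_le[OF time_continuous_const[of "\<lambda>b. 0"] assms(1), of a t] assms(2) by simp

text \<open>
  The expected number of jumps before \<open>\<tau>\<close> from \<open>b\<close>: the expected number of leaves is
  \<open>leaves b \<cdot> exp ((s + 2 gm) \<tau>)\<close>, and each leaf jumps at total rate \<open>s + gm + u nu1 + u nu0\<close>.
\<close>

definition expected_jumps :: "xi \<Rightarrow> real \<Rightarrow> real" where
  "expected_jumps b \<tau> = (s + gm + u * nu1 + u * nu0) / (s + 2 * gm) * leaves b
     * (exp ((s + 2 * gm) * \<tau>) - 1)"

lemma expected_jumps_nonneg: "0 \<le> \<tau> \<Longrightarrow> 0 \<le> expected_jumps b \<tau>"
  using s_pos gm_nonneg u_nonneg nu0_nonneg nu1_nonneg
  unfolding expected_jumps_def by (intro mult_nonneg_nonneg divide_nonneg_pos) auto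

lemma time_continuous_expected_jumps: "time_continuous expected_jumps"
  using s_pos gm_nonneg unfolding time_continuous_def expected_jumps_def
  by (auto intro!: continuous_intros)

lemma jump_op_expected_jumps:
  assumes "0 \<le> t"
  shows "jump_op (\<lambda>b \<tau>. 1 + expected_jumps b \<tau>) a t = expected_jumps a t"
proof -
  define K where "K = s + gm + u * nu1 + u * nu0"
  define c where "c = s + 2 * gm"
  define n where "n = real (leaves a)"
  have "c \<noteq> 0"
    using s_pos gm_nonneg by (simp add: c_def)
  have rate_a: "rate a = K * n"
    by (simp add: rate_eq_leaves K_def n_def)
  have expected_jumps_eq: "expected_jumps b \<tau> = K / c * leaves b * (exp (c * \<tau>) - 1)" for b \<tau>
    by (simp add: expected_jumps_def K_def c_def)
  let ?g = "\<lambda>\<tau>. exp (rate a * \<tau>) * weighted_sum (jumps a) (\<lambda>b. 1 + expected_jumps b \<tau>)"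
  have jump_sum: "weighted_sum (jumps a) (\<lambda>b. 1 + expected_jumps b \<tau>)
      = rate a + K / c * (n * (rate a + c)) * (exp (c * \<tau>) - 1)" for \<tau>
    unfolding expected_jumps_eq weighted_sum_add weighted_sum_mult_right weighted_sum_mult_left
      weighted_sum_jumps_const weighted_sum_jumps_leaves
    by (simp add: n_def c_def add.assoc)
  have "((\<lambda>\<tau>. exp (rate a * \<tau>) * (K / c * n * (exp (c * \<tau>) - 1))) has_real_derivative ?g \<tau>) (at \<tau>)"
    for \<tau>
    unfolding jump_sum rate_a
    using \<open>c \<noteq> 0\<close> by (auto intro!: derivative_eq_intros simp: field_simps)
  then have "(?g has_integral exp (rate a * t) * expected_jumps a t) {0..t}"
    using fundamental_theorem_of_calculus[OF assms, of "\<lambda>\<tau>. exp (rate a * \<tau>) * expected_jumps a \<tau>" ?g]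
    by (simp add: expected_jumps_eq n_def has_real_derivative_iff_has_vector_derivative[symmetric]
        has_field_derivative_at_within)
  then show ?thesis
    by (simp add: jump_op_eq_convolution integral_unique mult.assoc[symmetric] flip: exp_add)
qed

text \<open>
  \<open>(jump_op ^^ N) 1 b \<tau>\<close> is the probability of at least \<open>N\<close> jumps before \<open>\<tau>\<close> from \<open>b\<close>; their sum over
  \<open>N \<ge> 1\<close> is the expected number of jumps.
\<close>

lemma jump_op_iterate_one_tendsto_zero:
  assumes "0 \<le> t"
  shows "(\<lambda>N. (jump_op ^^ N) (\<lambda>b \<tau>. 1) a t) \<longlonglongrightarrow> 0"
proof -
  define P where "P N = (jump_op ^^ N) (\<lambda>b \<tau>. 1)" for N
  have P_Suc: "P (Suc N) = jump_op (P N)" for N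
    by (simp add: P_def)
  have P_continuous: "time_continuous (P N)" for N
    unfolding P_def by (intro time_continuous_jump_op_iterate time_continuous_const)
  have P_nonneg: "0 \<le> P N b \<tau>" if "0 \<le> \<tau>" for N b \<tau>
    using that
  proof (induction N arbitrary: b \<tau>)
    case 0
    show ?case by (simp add: P_def)
  next
    case (Suc N)
    show ?case unfolding P_Suc by (rule jump_op_nonneg[OF P_continuous Suc.IH])
  qed
  have sum_le: "(\<Sum>n<N. P (Suc n) b \<tau>) \<le> expected_jumps b \<tau>" if "0 \<le> \<tau>" for N b \<tau>
    using that
  proof (induction N arbitrary: b \<tau>)
    case 0
    then show ?case by (simp add: expected_jumps_nonneg)
  next
    case (Suc N)
    have sum_continuous: "time_continuous (\<lambda>b \<tau>. \<Sum>n<N. P (Suc n) b \<tau>)"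
      by (intro time_continuous_sum P_continuous)
    have "(\<Sum>n<Suc N. P (Suc n) b \<tau>) = jump_op (P 0) b \<tau> + (\<Sum>n<N. jump_op (P (Suc n)) b \<tau>)"
      unfolding sum.lessThan_Suc_shift P_Suc ..
    also have "\<dots> = jump_op (\<lambda>b \<tau>. 1 + (\<Sum>n<N. P (Suc n) b \<tau>)) b \<tau>"
      unfolding jump_op_add[OF time_continuous_const[of "\<lambda>b. 1"] sum_continuous]
        jump_op_sum[where h="\<lambda>n. P (Suc n)", OF P_continuous]
      by (simp add: P_def)
    also have "\<dots> \<le> jump_op (\<lambda>b \<tau>. 1 + expected_jumps b \<tau>) b \<tau>"
      using Suc.IH P_nonneg
      by (intro jump_op_abs_le[THEN order_trans[OF abs_ge_self]] time_continuous_add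
          time_continuous_const sum_continuous time_continuous_expected_jumps)
        (simp add: sum_nonneg)
    also have "\<dots> = expected_jumps b \<tau>"
      by (rule jump_op_expected_jumps[OF Suc.prems])
    finally show ?case .
  qed
  have "summable (\<lambda>n. P (Suc n) a t)"
    using sum_le assms P_nonneg by (intro summableI_nonneg_bounded) auto
  then have "(\<lambda>n. P (Suc n) a t) \<longlonglongrightarrow> 0"
    by (rule summable_LIMSEQ_zero)
  then show ?thesis
    unfolding P_def by (rule LIMSEQ_imp_Suc)
qed

lemma time_continuous_asg_part: "time_continuous (asg_part s gm u nu0 nu1 n f)"
proof (induction n)
  case 0
  show ?case by (auto simp: time_continuous_def intro!: continuous_intros)
next
  case (Suc n)
  then show ?case unfolding asg_part_Suc_eq_jump_op by (rule time_continuous_jump_op)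
qed

lemma first_jump_solution_partial_sum_error:
  assumes w_continuous: "time_continuous w"
    and w_bounded: "\<And>b \<tau>. 0 \<le> \<tau> \<Longrightarrow> \<bar>w b \<tau>\<bar> \<le> 1"
    and w_eq: "\<And>b \<tau>. 0 \<le> \<tau> \<Longrightarrow> w b \<tau> = exp (- rate b * \<tau>) * w b 0 + jump_op w b \<tau>"
    and "0 \<le> t"
  shows "\<bar>w a t - (\<Sum>n<N. asg_part s gm u nu0 nu1 n (\<lambda>b. w b 0) a t)\<bar>
    \<le> (jump_op ^^ N) (\<lambda>b \<tau>. 1) a t"
proof -
  define part where "part n = asg_part s gm u nu0 nu1 n (\<lambda>b. w b 0)" for n
  define rem where "rem N b \<tau> = w b \<tau> - (\<Sum>n<N. part n b \<tau>)" for N b \<tau>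
  have part_continuous: "time_continuous (part n)" for n
    unfolding part_def by (rule time_continuous_asg_part)
  have rem_continuous: "time_continuous (rem N)" for N
    unfolding rem_def by (intro time_continuous_diff time_continuous_sum w_continuous part_continuous)
  have rem_Suc: "rem (Suc N) b \<tau> = jump_op (rem N) b \<tau>" if "0 \<le> \<tau>" for N b \<tau>
  proof -
    have "rem (Suc N) b \<tau> = (w b \<tau> - part 0 b \<tau>) - (\<Sum>n<N. part (Suc n) b \<tau>)"
      unfolding rem_def sum.lessThan_Suc_shift by simp
    also have "\<dots> = jump_op w b \<tau> - (\<Sum>n<N. jump_op (part n) b \<tau>)"
      using w_eq[OF that, of b] by (simp add: part_def asg_part_Suc_eq_jump_op)
    also have "\<dots> = jump_op (rem N) b \<tau>"
      unfolding rem_def jump_op_diff[OF w_continuous time_continuous_sum[OF part_continuous]]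
        jump_op_sum[OF part_continuous] ..
    finally show ?thesis .
  qed
  have "\<bar>rem N b \<tau>\<bar> \<le> (jump_op ^^ N) (\<lambda>b \<tau>. 1) b \<tau>" if "0 \<le> \<tau>" for b \<tau>
    using that
  proof (induction N arbitrary: b \<tau>)
    case 0
    then show ?case by (simp add: rem_def w_bounded)
  next
    case (Suc N)
    show ?case
      unfolding rem_Suc[OF Suc.prems] funpow.simps o_apply
      using Suc.IH
      by (intro jump_op_abs_le rem_continuous time_continuous_jump_op_iterate time_continuous_const)
  qed
  then show ?thesis
    using \<open>0 \<le> t\<close> by (simp add: rem_def part_def)
qed

theorem first_jump_solution_eq_asg_expect:
  assumes "time_continuous w"
    and "\<And>b \<tau>. 0 \<le> \<tau> \<Longrightarrow> \<bar>w b \<tau>\<bar> \<le> 1"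
    and "\<And>b \<tau>. 0 \<le> \<tau> \<Longrightarrow> w b \<tau> = exp (- rate b * \<tau>) * w b 0 + jump_op w b \<tau>"
    and "0 \<le> t"
  shows "w a t = asg_expect s gm u nu0 nu1 (\<lambda>b. w b 0) a t"
proof -
  let ?partial_sum = "\<lambda>N. \<Sum>n<N. asg_part s gm u nu0 nu1 n (\<lambda>b. w b 0) a t"
  have "(\<lambda>N. w a t - ?partial_sum N) \<longlonglongrightarrow> 0"
    using first_jump_solution_partial_sum_error[OF assms]
    by (intro Lim_null_comparison[OF _ jump_op_iterate_one_tendsto_zero[OF \<open>0 \<le> t\<close>, of a]]) auto
  then have "?partial_sum \<longlonglongrightarrow> w a t"
    using tendsto_diff[OF tendsto_const[of "w a t"]] by fastforce
  then show ?thesis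
    by (simp add: asg_expect_def sums_def sums_unique)
qed
lemma drift_solution_nonneg:
  fixes y :: "real \<Rightarrow> real"
  assumes y_deriv: "\<And>t. 0 \<le> t \<Longrightarrow> (y has_real_derivative drift (y t)) (at t within {0..})"
    and "0 \<le> y 0" and "0 \<le> t"
  shows "0 \<le> y t"
proof -
  have "- y t \<le> 0"
  proof (rule nonpos_preserved_by_deriv_bound[where z="\<lambda>x. - y x" and z'="\<lambda>x. - drift (y x)" and M=0])
    show "continuous_on {0..t} (\<lambda>x. - y x)"
      using DERIV_on_nonneg_realsD(1)[OF y_deriv] by (intro continuous_intros)
    show "((\<lambda>x. - y x) has_real_derivative - drift (y x)) (at x)" if "0 < x" for x
      using DERIV_on_nonneg_realsD(2)[OF y_deriv that] by (rule DERIV_minus)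
    show "- drift (y x) \<le> 0 * - y x" if "0 < - y x" for x
    proof -
      have "0 \<le> - y x * (1 - y x) * (s + gm * (1 - y x))"
        using that s_pos gm_nonneg by (intro mult_nonneg_nonneg) auto
      moreover have "0 \<le> u * nu1 * (1 - y x)"
        using that u_nonneg nu1_nonneg by (intro mult_nonneg_nonneg) auto
      moreover have "0 \<le> u * nu0 * - y x"
        using that u_nonneg nu0_nonneg by (intro mult_nonneg_nonneg) auto
      ultimately show ?thesis
        by (simp add: drift_def algebra_simps)
    qed
  qed (use assms in auto)
  then show ?thesis
    by simp
qed

lemma drift_solution_le_one:
  fixes y :: "real \<Rightarrow> real"
  assumes y_deriv: "\<And>t. 0 \<le> t \<Longrightarrow> (y has_real_derivative drift (y t)) (at t within {0..})"
    and "y 0 \<le> 1" and "0 \<le> t"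
  shows "y t \<le> 1"
proof -
  have y_continuous: "continuous_on {0..t} y"
    by (rule DERIV_on_nonneg_realsD(1)[OF y_deriv])
  have "bounded (y ` {0..t})"
    by (intro compact_imp_bounded compact_continuous_image y_continuous compact_Icc)
  then obtain B where B: "\<forall>v\<in>y ` {0..t}. \<bar>v\<bar> \<le> B"
    by (auto simp: bounded_iff)
  have "y t - 1 \<le> 0"
  proof (rule nonpos_preserved_by_deriv_bound[where z="\<lambda>x. y x - 1" and z'="\<lambda>x. drift (y x)" and M="B * s"])
    show "continuous_on {0..t} (\<lambda>x. y x - 1)"
      using y_continuous by (intro continuous_intros)
    show "((\<lambda>x. y x - 1) has_real_derivative drift (y x)) (at x)" if "0 < x" for x
      using DERIV_on_nonneg_realsD(2)[OF y_deriv that] by (auto intro!: derivative_eq_intros)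
    show "drift (y x) \<le> B * s * (y x - 1)" if "0 < x" "x < t" "0 < y x - 1" for x
    proof -
      define d where "d = y x - 1"
      have "drift (y x) = y x * d * s - gm * d * d * y x - u * nu1 * d - u * nu0 * y x"
        by (simp add: drift_def d_def algebra_simps)
      moreover have "0 \<le> gm * d * d * y x" and "0 \<le> u * nu1 * d" and "0 \<le> u * nu0 * y x"
        using that gm_nonneg u_nonneg nu0_nonneg nu1_nonneg by (auto simp: d_def)
      moreover have "y x \<in> y ` {0..t}"
        using that by simp
      then have "\<bar>y x\<bar> \<le> B"
        by (rule bspec[OF B])
      then have "y x \<le> B"
        by (rule abs_le_D1)
      then have "y x * d * s \<le> B * d * s"
        using that s_pos by (intro mult_right_mono) (auto simp: d_def)
      ultimately show ?thesis
        by (simp add: d_def algebra_simps)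
    qed
  qed (use assms in auto)
  then show ?thesis
    by simp
qed

theorem H_drift_solution_eq_asg_expect:
  fixes y :: "real \<Rightarrow> real"
  assumes y_deriv: "\<And>t. 0 \<le> t \<Longrightarrow> (y has_real_derivative drift (y t)) (at t within {0..})"
    and "0 \<le> y 0" and "y 0 \<le> 1" and "0 \<le> t"
  shows "H a (y t) = asg_expect s gm u nu0 nu1 (\<lambda>b. H b (y 0)) a t"
proof (rule first_jump_solution_eq_asg_expect[where w="\<lambda>b \<tau>. H b (y \<tau>)", OF _ _ _ \<open>0 \<le> t\<close>])
  show "time_continuous (\<lambda>b \<tau>. H b (y \<tau>))"
    unfolding time_continuous_def using DERIV_on_nonneg_realsD(1)[OF y_deriv]
    by (auto intro: continuous_on_compose2[OF continuous_on_H])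
  show "\<bar>H b (y \<tau>)\<bar> \<le> 1" if "0 \<le> \<tau>" for b \<tau>
    using H_bounds[of "y \<tau>" b] drift_solution_nonneg[OF y_deriv] drift_solution_le_one[OF y_deriv]
      assms that by auto
  show "H b (y \<tau>) = exp (- rate b * \<tau>) * H b (y 0) + jump_op (\<lambda>b \<tau>. H b (y \<tau>)) b \<tau>"
    if "0 \<le> \<tau>" for b \<tau>
    by (rule H_drift_solution_integral_eq[OF y_deriv that])
qed

end

theorem theorem2p11:
  fixes s g u nu0 nu1 y0 :: real and y :: "real \<Rightarrow> real"
  assumes "s > 0" and "g \<ge> 0" and "u > 0" and "nu0 \<ge> 0" and "nu1 \<ge> 0"
    and "nu0 + nu1 = 1"
    and "0 \<le> y0" and "y0 \<le> 1"
    and "y 0 = y0"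
    and "\<And>t. t \<ge> 0 \<Longrightarrow> (y has_real_derivative
           (- y t * (1 - y t) * (s + g * (1 - y t)) + u * nu1 * (1 - y t) - u * nu0 * y t))
           (at t within {0..})"
  shows "(\<forall>a t. t \<ge> 0 \<longrightarrow> H a (y t) = asg_expect s g u nu0 nu1 (\<lambda>b. H b y0) a t)
       \<and> (\<forall>t. t \<ge> 0 \<longrightarrow> y t = asg_expect s g u nu0 nu1 (\<lambda>b. H b y0) Leaf t)"
proof -
  interpret asg_rates s g u nu0 nu1
    using assms(1-5) by unfold_locales auto
  have y_deriv: "\<And>t. 0 \<le> t \<Longrightarrow> (y has_real_derivative drift (y t)) (at t within {0..})"
    using assms(10) by (simp add: drift_def)
  have "H a (y t) = asg_expect s g u nu0 nu1 (\<lambda>b. H b y0) a t" if "0 \<le> t" for a t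
    using H_drift_solution_eq_asg_expect[OF y_deriv _ _ that] assms(7-9) by simp
  then show ?thesis
    by (metis H.simps(1))
qed

end
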